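(* Let $d=1$, $1\le\alpha<2$ and $0<t_0\le1$. Let $Y_t$ be a symmetric Lévy process in $\mathbb{R}$ with triplet $(0,\nu^Y,0)$ and transition density $p^Y(t,x)$, and suppose $\sigma=\tilde\nu-\nu^Y$ is a finite signed measure; set $m=\sigma(\mathbb{R})$, $M=|\sigma|(\mathbb{R})$. Then there is a constant $C=C(m,M)$ (depending also on $\alpha$) such that for all $x\in\mathbb{R}$ \[\int_0^{t_0}\big|\tilde p(t,x)-e^{-2mt}p^Y(t,x)\big|\,dt\le C\,t_0^{2-1/\alpha}.\]
   Context: $\tilde p(t,x)$ is the transition density and $\tilde\nu(dx)=\mathscr{A}(-\alpha,1)|x|^{-1-\alpha}dx$ the Lévy measure of the symmetric $\alpha$-stable process on $\mathbb{R}$ (characteristic function $e^{-t|z|^\alpha}$), $\mathscr{A}(\rho,d)=\frac{\Gamma((d-\rho)/2)}{\pi^{d/2}2^{\rho}|\Gamma(\rho/2)|}$. *)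

theory Defs
  imports "HOL-Analysis.Analysis"
begin

definition calA :: "real \<Rightarrow> real \<Rightarrow> real" where
  "calA rho d = Gamma ((d - rho) / 2) / (pi powr (d / 2) * 2 powr rho * \<bar>Gamma (rho / 2)\<bar>)"

definition stable_levy_measure :: "real \<Rightarrow> real measure" where
  "stable_levy_measure a =
     density lborel (\<lambda>x. ennreal (if x = 0 then 0 else calA (- a) 1 * \<bar>x\<bar> powr (- 1 - a)))"

definition is_levy_measure :: "real measure \<Rightarrow> bool" where
  "is_levy_measure \<nu> \<longleftrightarrow> sets \<nu> = sets borel \<and> emeasure \<nu> {0} = 0 \<and>
     (\<integral>\<^sup>+ x. ennreal (min 1 (x\<^sup>2)) \<partial>\<nu>) < \<infinity>"

definition symmetric_measure :: "real measure \<Rightarrow> bool" where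
  "symmetric_measure \<nu> \<longleftrightarrow> (\<forall>A\<in>sets borel. emeasure \<nu> (uminus ` A) = emeasure \<nu> A)"

text \<open>Levy-Khintchine exponent for the triplet (0, nu, 0) (truncation 1_{|x|<1}):
  psi(z) = int (1 - e^{izx} + i z x 1_{|x|<1}) nu(dx), so that E e^{izY_t} = e^{-t psi(z)}.\<close>
definition levy_exponent :: "real measure \<Rightarrow> real \<Rightarrow> complex" where
  "levy_exponent \<nu> z =
     (\<integral>x. (1 - cis (z * x) + \<i> * complex_of_real (z * x * indicator {-1<..<1} x)) \<partial>\<nu>)"

text \<open>p is the (continuous version of the) transition density of a Levy process on R whose
  characteristic function at time t is exp(-t psi(z)): for every t > 0, p t is a nonnegative,
  continuous, Lebesgue integrable function with Fourier transform exp(-t psi).\<close>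
definition is_transition_density :: "(real \<Rightarrow> complex) \<Rightarrow> (real \<Rightarrow> real \<Rightarrow> real) \<Rightarrow> bool" where
  "is_transition_density \<psi> p \<longleftrightarrow>
     (\<forall>t>0. (\<forall>x. p t x \<ge> 0) \<and> continuous_on UNIV (p t) \<and> integrable lborel (p t) \<and>
        (\<forall>z. (\<integral>x. cis (z * x) * complex_of_real (p t x) \<partial>lborel) = exp (- complex_of_real t * \<psi> z)))"

end

(* Fix 0 < t <= 1 and put f = pt t - exp (- 2 m t) * pY t.  As nuY = nu~ - sigma_p + sigma_n is
   symmetric, the Levy exponent of Y is real: psi_Y z = |z| powr alpha + w z with
   w z = int (1 - cos (z x)) d(sigma_n - sigma_p), and 2 m + w z lies in [- 2 sigma_n(R), 2 sigma_p(R)],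
   so |2 m + w z| <= 2 M.  Hence the Fourier transform of f, exp (- t |z|^alpha) (1 - exp (- t (2 m + w z))),
   is at most 2 M t e^(2 M) exp (- t |z|^alpha) <= 2 M t e^(2 M + 1) exp (- t^(1/alpha) |z|) (this is where
   alpha >= 1 enters), whose integral is O(t^(1 - 1/alpha)).  Fourier inversion at the point x, done by Gaussian
   smoothing because f is only known to be continuous and integrable, gives |f x| <= C t^(1 - 1/alpha);
   integrating over (0, t0] gives C t0^(2 - 1/alpha).
   The identity int (1 - cos (z x)) nu~(dx) = |z|^alpha, which is what the constant A(-alpha, 1) is normalised for,
   follows by subordination: |u|^(-1-alpha) is a Gamma-weighted integral of the Gaussians exp (- r u^2). *)

theory Submission
  imports Defs "HOL-Probability.Probability"
begin

section \<open>Fourier inversion at a point by Gaussian smoothing\<close>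

lemma borel_measurable_cis [measurable]: "cis \<in> borel_measurable borel"
  by (intro borel_measurable_continuous_onI continuous_intros)

lemma integrable_cis_mult:
  fixes f :: "real \<Rightarrow> real"
  assumes "integrable lborel f"
  shows "integrable lborel (\<lambda>y. cis (z * y) * complex_of_real (f y))"
proof (rule Bochner_Integration.integrable_bound[OF integrable_of_real[OF integrable_abs[OF assms], where 'a=complex]])
  have [measurable]: "f \<in> borel_measurable borel"
    using assms by (simp add: borel_measurable_integrable)
  show "(\<lambda>y. cis (z * y) * complex_of_real (f y)) \<in> borel_measurable lborel" by measurable
qed (auto simp: norm_mult)

lemma integral_cis_mult_diff:
  fixes g h :: "real \<Rightarrow> real"
  assumes g: "integrable lborel g" and h: "integrable lborel h"
  shows "(\<integral>y. cis (z * y) * complex_of_real (g y - c * h y) \<partial>lborel)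
       = (\<integral>y. cis (z * y) * complex_of_real (g y) \<partial>lborel)
         - complex_of_real c * (\<integral>y. cis (z * y) * complex_of_real (h y) \<partial>lborel)"
proof -
  have "(\<lambda>y. cis (z * y) * complex_of_real (g y - c * h y)) = (\<lambda>y. cis (z * y) * complex_of_real (g y)
      - complex_of_real c * (cis (z * y) * complex_of_real (h y)))"
    by (auto simp: algebra_simps)
  then show ?thesis
    using integrable_cis_mult[OF g, of z] integrable_cis_mult[OF h, of z] by simp
qed

lemma integrable_gaussian:
  fixes e :: real
  assumes "e > 0"
  shows "integrable lborel (\<lambda>z. exp (- (e * z)\<^sup>2 / 2))"
proof -
  have "integrable lborel (\<lambda>x. sqrt (2 * pi) * std_normal_density x)"
    by (intro integrable_mult_right) auto
  then have "integrable lborel (\<lambda>x::real. exp (- x\<^sup>2 / 2))"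
    by (simp add: std_normal_density_def)
  from lborel_integrable_real_affine[OF this, of e 0] assms show ?thesis by simp
qed

lemma fourier_transform_gaussian:
  fixes e u :: real
  assumes e: "e > 0"
  shows "(\<integral>z. cis (z * u) * complex_of_real (exp (- (e * z)\<^sup>2 / 2)) \<partial>lborel)
       = complex_of_real (2 * pi * normal_density 0 e u)"
proof -
  have std_fourier: "(\<integral>x. cis (v * x) * complex_of_real (exp (- x\<^sup>2 / 2)) \<partial>lborel)
      = complex_of_real (sqrt (2 * pi) * exp (- v\<^sup>2 / 2))" for v :: real
  proof -
    have "char std_normal_distribution v = (\<integral>x. std_normal_density x *\<^sub>R iexp (v * x) \<partial>lborel)"
      unfolding char_def by (rule integral_density) auto
    then have "(\<integral>x. std_normal_density x *\<^sub>R iexp (v * x) \<partial>lborel) = complex_of_real (exp (- v\<^sup>2 / 2))"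
      by (simp add: char_std_normal_distribution)
    moreover have "(\<lambda>x. cis (v * x) * complex_of_real (exp (- x\<^sup>2 / 2)))
        = (\<lambda>x. sqrt (2 * pi) *\<^sub>R (std_normal_density x *\<^sub>R iexp (v * x)))"
      by (auto simp: std_normal_density_def cis_conv_exp scaleR_conv_of_real)
    ultimately show ?thesis by (simp add: scaleR_conv_of_real)
  qed
  have density_eq: "sqrt (2 * pi) / e * exp (- (u / e)\<^sup>2 / 2) = 2 * pi * normal_density 0 e u"
  proof -
    have "sqrt (2 * pi * e\<^sup>2) = sqrt (2 * pi) * e"
      using e by (simp add: real_sqrt_mult)
    then have "2 * pi / sqrt (2 * pi * e\<^sup>2) = sqrt (2 * pi) * sqrt (2 * pi) / (sqrt (2 * pi) * e)"
      by simp
    also have "\<dots> = sqrt (2 * pi) / e"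
      by (rule nonzero_mult_divide_mult_cancel_left) simp
    finally have c: "sqrt (2 * pi) / e = 2 * pi / sqrt (2 * pi * e\<^sup>2)" ..
    have "exp (- (u / e)\<^sup>2 / 2) = exp (- (u - 0)\<^sup>2 / (2 * e\<^sup>2))"
      by (simp add: power_divide mult.commute)
    then show ?thesis
      unfolding normal_density_def c by simp
  qed
  have "(\<integral>z. cis (z * u) * complex_of_real (exp (- (e * z)\<^sup>2 / 2)) \<partial>lborel)
      = \<bar>1 / e\<bar> *\<^sub>R (\<integral>x. cis ((0 + 1 / e * x) * u) * complex_of_real (exp (- (e * (0 + 1 / e * x))\<^sup>2 / 2)) \<partial>lborel)"
    by (rule lborel_integral_real_affine) (use e in auto)
  also have "(\<lambda>x. cis ((0 + 1 / e * x) * u) * complex_of_real (exp (- (e * (0 + 1 / e * x))\<^sup>2 / 2)))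
      = (\<lambda>x. cis (u / e * x) * complex_of_real (exp (- x\<^sup>2 / 2)))"
    using e by (auto simp: field_simps)
  finally show ?thesis
    using e by (simp only: std_fourier scaleR_conv_of_real density_eq[symmetric]) (simp add: abs_of_pos)
qed

lemma gaussian_smoothing_eq_fourier_integral:
  fixes f :: "real \<Rightarrow> real" and e x :: real
  assumes f: "integrable lborel f" and e: "e > 0"
  shows "complex_of_real (2 * pi * (\<integral>y. f y * normal_density x e y \<partial>lborel))
       = (\<integral>z. (\<integral>y. cis (z * y) * complex_of_real (f y) \<partial>lborel) * cis (- (z * x))
              * complex_of_real (exp (- (e * z)\<^sup>2 / 2)) \<partial>lborel)"
proof -
  have [measurable]: "f \<in> borel_measurable borel"
    using f by (simp add: borel_measurable_integrable)
  define E where "E z = exp (- (e * z)\<^sup>2 / 2)" for z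
  define \<Phi> where "\<Phi> y z = complex_of_real (f y) * (cis (z * (y - x)) * complex_of_real (E z))" for y z
  have \<Phi>_measurable: "(\<lambda>(y, z). \<Phi> y z) \<in> borel_measurable (lborel \<Otimes>\<^sub>M lborel)"
    unfolding \<Phi>_def E_def by measurable
  have norm_\<Phi>: "norm (\<Phi> y z) = \<bar>f y\<bar> * E z" for y z
    by (simp add: \<Phi>_def norm_mult E_def)
  have \<Phi>_integrable: "integrable (lborel \<Otimes>\<^sub>M lborel) (\<lambda>(y, z). \<Phi> y z)"
  proof (rule lborel_pair.Fubini_integrable[OF \<Phi>_measurable])
    show "integrable lborel (\<lambda>y. \<integral>z. norm (case (y, z) of (y, z) \<Rightarrow> \<Phi> y z) \<partial>lborel)"
      using f by (simp add: norm_\<Phi>)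
    show "AE y in lborel. integrable lborel (\<lambda>z. case (y, z) of (y, z) \<Rightarrow> \<Phi> y z)"
    proof (rule AE_I2)
      fix y
      show "integrable lborel (\<lambda>z. case (y, z) of (y, z) \<Rightarrow> \<Phi> y z)"
      proof (rule Bochner_Integration.integrable_bound[of _ "\<lambda>z. \<bar>f y\<bar> * E z"])
        show "integrable lborel (\<lambda>z. \<bar>f y\<bar> * E z)"
          unfolding E_def using e by (intro integrable_mult_right integrable_gaussian)
        show "(\<lambda>z. case (y, z) of (y, z) \<Rightarrow> \<Phi> y z) \<in> borel_measurable lborel"
          using \<Phi>_measurable by measurable
      qed (auto simp: norm_\<Phi> E_def)
    qed
  qed
  have inner: "(\<integral>z. \<Phi> y z \<partial>lborel) = complex_of_real (2 * pi * (f y * normal_density x e y))" for y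
  proof -
    have "(\<integral>z. \<Phi> y z \<partial>lborel) = complex_of_real (f y) * (\<integral>z. cis (z * (y - x)) * complex_of_real (E z) \<partial>lborel)"
      unfolding \<Phi>_def by (rule integral_mult_right_zero)
    also have "\<dots> = complex_of_real (f y * (2 * pi * normal_density 0 e (y - x)))"
      unfolding E_def fourier_transform_gaussian[OF e] by simp
    finally show ?thesis by (simp add: normal_density_def power2_commute)
  qed
  have "(\<integral>z. (\<integral>y. cis (z * y) * complex_of_real (f y) \<partial>lborel) * cis (- (z * x)) * complex_of_real (E z) \<partial>lborel)
      = (\<integral>z. (\<integral>y. \<Phi> y z \<partial>lborel) \<partial>lborel)"
  proof (rule Bochner_Integration.integral_cong[OF refl])
    fix z
    have "cis (z * (y - x)) = cis (z * y) * cis (- (z * x))" for y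
      by (simp add: cis_mult right_diff_distrib)
    then have \<Phi>_eq: "\<Phi> y z = cis (z * y) * complex_of_real (f y) * (cis (- (z * x)) * complex_of_real (E z))" for y
      by (simp add: \<Phi>_def mult_ac)
    show "(\<integral>y. cis (z * y) * complex_of_real (f y) \<partial>lborel) * cis (- (z * x)) * complex_of_real (E z)
        = (\<integral>y. \<Phi> y z \<partial>lborel)"
      unfolding \<Phi>_eq integral_mult_left_zero by (simp only: mult.assoc)
  qed
  also have "\<dots> = (\<integral>y. (\<integral>z. \<Phi> y z \<partial>lborel) \<partial>lborel)"
    using lborel_pair.Fubini_integral[OF \<Phi>_integrable] by simp
  also have "\<dots> = complex_of_real (2 * pi * (\<integral>y. f y * normal_density x e y \<partial>lborel))"
    unfolding inner integral_complex_of_real integral_mult_right_zero ..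
  finally show ?thesis unfolding E_def by simp
qed

lemma gaussian_smoothing_bound:
  fixes f G :: "real \<Rightarrow> real"
  assumes f: "integrable lborel f" and e: "e > 0" and G: "integrable lborel G"
    and fourier_le: "\<And>z. norm (\<integral>y. cis (z * y) * complex_of_real (f y) \<partial>lborel) \<le> G z"
  shows "\<bar>\<integral>y. f y * normal_density x e y \<partial>lborel\<bar> \<le> (\<integral>z. G z \<partial>lborel) / (2 * pi)"
proof -
  define H where "H z = (\<integral>y. cis (z * y) * complex_of_real (f y) \<partial>lborel) * cis (- (z * x))
      * complex_of_real (exp (- (e * z)\<^sup>2 / 2))" for z
  have G_nonneg: "0 \<le> G z" for z
    using fourier_le[of z] norm_ge_zero order_trans by blast
  have norm_H: "norm (H z) \<le> G z" for z
  proof -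
    have "norm (H z) = norm (\<integral>y. cis (z * y) * complex_of_real (f y) \<partial>lborel) * exp (- (e * z)\<^sup>2 / 2)"
      by (simp add: H_def norm_mult)
    also have "\<dots> \<le> G z * 1"
      using fourier_le[of z] G_nonneg[of z] by (intro mult_mono) auto
    finally show ?thesis by simp
  qed
  have "norm (\<integral>z. H z \<partial>lborel) \<le> (\<integral>z. G z \<partial>lborel)"
  proof (cases "integrable lborel H")
    case True
    then show ?thesis
      using G norm_H by (intro Bochner_Integration.integral_norm_bound_integral) auto
  next
    case False
    then show ?thesis
      using G_nonneg by (simp add: not_integrable_integral_eq integral_nonneg)
  qed
  moreover have "norm (\<integral>z. H z \<partial>lborel) = 2 * pi * \<bar>\<integral>y. f y * normal_density x e y \<partial>lborel\<bar>"
    unfolding H_def gaussian_smoothing_eq_fourier_integral[OF f e, symmetric] norm_of_real by (simp add: abs_mult)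
  ultimately show ?thesis
    by (simp add: field_simps)
qed

lemma normal_density_le_far:
  fixes e \<delta> x y :: real
  assumes e: "e > 0" and \<delta>: "\<delta> > 0" and far: "\<delta> \<le> \<bar>y - x\<bar>"
  shows "normal_density x e y \<le> e / \<delta>\<^sup>2"
proof -
  define s where "s = (y - x)\<^sup>2 / (2 * e\<^sup>2)"
  have "\<delta>\<^sup>2 \<le> \<bar>y - x\<bar>\<^sup>2"
    using far \<delta> by (intro power_mono) auto
  then have s_ge: "\<delta>\<^sup>2 / (2 * e\<^sup>2) \<le> s"
    unfolding s_def by (simp add: divide_right_mono)
  moreover have "0 < \<delta>\<^sup>2 / (2 * e\<^sup>2)"
    using \<delta> e by simp
  ultimately have s_pos: "0 < s"
    by linarith
  have "s \<le> exp s"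
    using exp_ge_add_one_self[of s] by linarith
  then have "exp (- s) \<le> 1 / s"
    using s_pos by (simp add: exp_minus inverse_eq_divide frac_le)
  also have "\<dots> \<le> 2 * e\<^sup>2 / \<delta>\<^sup>2"
    using s_ge s_pos \<delta> e by (simp add: field_simps)
  finally have exp_le: "exp (- s) \<le> 2 * e\<^sup>2 / \<delta>\<^sup>2" .
  have "2 \<le> sqrt (2 * pi)"
    using pi_gt3 by (simp add: real_le_rsqrt)
  then have sqrt_le: "1 / sqrt (2 * pi * e\<^sup>2) \<le> 1 / (2 * e)"
    using e by (simp add: real_sqrt_mult frac_le)
  have "normal_density x e y = 1 / sqrt (2 * pi * e\<^sup>2) * exp (- s)"
    by (simp add: normal_density_def s_def)
  also have "\<dots> \<le> 1 / (2 * e) * (2 * e\<^sup>2 / \<delta>\<^sup>2)"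
    by (rule mult_mono[OF sqrt_le exp_le]) (use e in simp_all)
  also have "\<dots> = e / \<delta>\<^sup>2"
    using e by (simp add: power2_eq_square)
  finally show ?thesis .
qed

text \<open>Off the \<open>\<delta>\<close>-ball around \<open>x\<close> the quadratic term absorbs \<open>b * normal_density x e y\<close>,
  and \<open>normal_density_le_far\<close> controls the last term.\<close>

lemma normal_density_minorant_le:
  fixes f :: "real \<Rightarrow> real"
  assumes e: "e > 0" and \<delta>: "\<delta> > 0" and near: "\<bar>y - x\<bar> < \<delta> \<Longrightarrow> b \<le> f y"
  shows "b * normal_density x e y - \<bar>b\<bar> / \<delta>\<^sup>2 * (normal_density x e y * (y - x)\<^sup>2) - e / \<delta>\<^sup>2 * \<bar>f y\<bar>
      \<le> f y * normal_density x e y"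
proof (cases "\<bar>y - x\<bar> < \<delta>")
  case True
  then have "b * normal_density x e y \<le> f y * normal_density x e y"
    using near by (intro mult_right_mono) auto
  moreover have "0 \<le> \<bar>b\<bar> / \<delta>\<^sup>2 * (normal_density x e y * (y - x)\<^sup>2)" "0 \<le> e / \<delta>\<^sup>2 * \<bar>f y\<bar>"
    using e by simp_all
  ultimately show ?thesis
    by linarith
next
  case False
  define nd where "nd = normal_density x e y"
  have nd_nonneg: "0 \<le> nd"
    by (simp add: nd_def)
  have "\<delta>\<^sup>2 \<le> \<bar>y - x\<bar>\<^sup>2"
    using False \<delta> by (intro power_mono) auto
  then have "1 \<le> (y - x)\<^sup>2 / \<delta>\<^sup>2"
    using \<delta> by simp
  then have "\<bar>b\<bar> * nd * 1 \<le> \<bar>b\<bar> * nd * ((y - x)\<^sup>2 / \<delta>\<^sup>2)"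
    using nd_nonneg by (intro mult_left_mono) auto
  moreover have "b * nd \<le> \<bar>b\<bar> * nd"
    using nd_nonneg by (intro mult_right_mono) auto
  moreover have "nd \<le> e / \<delta>\<^sup>2"
    using False e \<delta> unfolding nd_def by (intro normal_density_le_far) auto
  then have "\<bar>f y\<bar> * nd \<le> \<bar>f y\<bar> * (e / \<delta>\<^sup>2)"
    by (intro mult_left_mono) auto
  moreover have "- \<bar>f y\<bar> \<le> f y"
    by linarith
  then have "- \<bar>f y\<bar> * nd \<le> f y * nd"
    using nd_nonneg by (rule mult_right_mono)
  ultimately show ?thesis
    unfolding nd_def[symmetric] by (simp add: field_simps)
qed

lemma integrable_mult_normal_density:
  fixes f :: "real \<Rightarrow> real"
  assumes f: "integrable lborel f"
  shows "integrable lborel (\<lambda>y. f y * normal_density x e y)"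
proof (rule Bochner_Integration.integrable_bound[OF integrable_mult_right[OF integrable_abs[OF f], of "1 / sqrt (2 * pi * e\<^sup>2)"]])
  have [measurable]: "f \<in> borel_measurable borel"
    using f by (simp add: borel_measurable_integrable)
  show "(\<lambda>y. f y * normal_density x e y) \<in> borel_measurable lborel"
    by measurable
  have "normal_density x e y \<le> 1 / sqrt (2 * pi * e\<^sup>2) * 1" for y
    unfolding normal_density_def by (intro mult_left_mono) auto
  then have "\<bar>f y\<bar> * normal_density x e y \<le> \<bar>f y\<bar> * (1 / sqrt (2 * pi * e\<^sup>2))" for y
    by (intro mult_left_mono) auto
  then show "AE y in lborel. norm (f y * normal_density x e y) \<le> norm (1 / sqrt (2 * pi * e\<^sup>2) * \<bar>f y\<bar>)"
    by (intro AE_I2) (simp add: abs_mult mult.commute)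
qed

lemma gaussian_smoothing_lower_bound:
  fixes f :: "real \<Rightarrow> real"
  assumes f: "integrable lborel f" and e: "e > 0" and \<delta>: "\<delta> > 0"
    and near: "\<And>y. \<bar>y - x\<bar> < \<delta> \<Longrightarrow> b \<le> f y"
  shows "b - (\<bar>b\<bar> * e\<^sup>2 + e * (\<integral>y. \<bar>f y\<bar> \<partial>lborel)) / \<delta>\<^sup>2 \<le> (\<integral>y. f y * normal_density x e y \<partial>lborel)"
proof -
  define nd where "nd = normal_density x e"
  define low where "low y = b * nd y - \<bar>b\<bar> / \<delta>\<^sup>2 * (nd y * (y - x)\<^sup>2) - e / \<delta>\<^sup>2 * \<bar>f y\<bar>" for y
  have int_nd: "integrable lborel nd" and int_moment: "integrable lborel (\<lambda>y. nd y * (y - x)\<^sup>2)"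
    using integrable_normal_moment[of e x 2] e by (simp_all add: nd_def)
  have "(\<integral>y. low y \<partial>lborel) \<le> (\<integral>y. f y * nd y \<partial>lborel)"
  proof (rule integral_mono)
    show "integrable lborel low"
      unfolding low_def using int_nd int_moment f
      by (intro Bochner_Integration.integrable_diff integrable_mult_right integrable_abs)
    show "integrable lborel (\<lambda>y. f y * nd y)"
      unfolding nd_def using f by (rule integrable_mult_normal_density)
    show "low y \<le> f y * nd y" for y
      unfolding low_def nd_def using e \<delta> near by (rule normal_density_minorant_le)
  qed
  moreover have "(\<integral>y. low y \<partial>lborel) = b - (\<bar>b\<bar> * e\<^sup>2 + e * (\<integral>y. \<bar>f y\<bar> \<partial>lborel)) / \<delta>\<^sup>2"
  proof -
    have "(\<integral>y. nd y * (y - x)\<^sup>2 \<partial>lborel) = e\<^sup>2"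
      using integral_normal_moment_even[of e x 1] e by (simp add: nd_def power2_eq_square)
    moreover have "(\<integral>y. nd y \<partial>lborel) = 1"
      using e by (simp add: nd_def)
    ultimately show ?thesis
      unfolding low_def using int_nd int_moment f
      by (simp add: field_simps add_divide_distrib)
  qed
  ultimately show ?thesis
    by (simp add: nd_def)
qed

lemma eventually_gaussian_smoothing_gt:
  fixes f :: "real \<Rightarrow> real"
  assumes f: "integrable lborel f" and cont: "isCont f x" and a: "a < f x"
  shows "\<forall>\<^sub>F e in at_right 0. a < (\<integral>y. f y * normal_density x e y \<partial>lborel)"
proof -
  define b where "b = (a + f x) / 2"
  obtain \<delta> where \<delta>: "\<delta> > 0" and near: "\<And>y. \<bar>y - x\<bar> < \<delta> \<Longrightarrow> b \<le> f y"
  proof -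
    have "f x - b > 0"
      using a by (simp add: b_def)
    then obtain \<delta> where \<delta>: "\<delta> > 0" and close: "\<And>y. dist y x < \<delta> \<Longrightarrow> dist (f y) (f x) < f x - b"
      using cont unfolding continuous_at_eps_delta by blast
    show ?thesis
    proof (rule that[OF \<delta>])
      fix y assume "\<bar>y - x\<bar> < \<delta>"
      then have "\<bar>f y - f x\<bar> < f x - b"
        using close by (simp add: dist_real_def)
      then show "b \<le> f y"
        by linarith
    qed
  qed
  define L where "L = (\<integral>y. \<bar>f y\<bar> \<partial>lborel)"
  have "((\<lambda>e. b - (\<bar>b\<bar> * e\<^sup>2 + e * L) / \<delta>\<^sup>2) \<longlongrightarrow> b) (at_right 0)"
    using \<delta> by (intro tendsto_eq_intros) auto
  moreover have "a < b"
    using a by (simp add: b_def)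
  ultimately have "\<forall>\<^sub>F e in at_right 0. a < b - (\<bar>b\<bar> * e\<^sup>2 + e * L) / \<delta>\<^sup>2"
    by (rule order_tendstoD(1))
  moreover have "\<forall>\<^sub>F e in at_right 0. (0::real) < e"
    by (simp add: eventually_at_right_less)
  ultimately show ?thesis
  proof eventually_elim
    case (elim e)
    then show ?case
      using gaussian_smoothing_lower_bound[where x = x and b = b, OF f elim(2) \<delta> near] by (simp add: L_def)
  qed
qed

lemma gaussian_smoothing_tendsto:
  fixes f :: "real \<Rightarrow> real"
  assumes f: "integrable lborel f" and cont: "isCont f x"
  shows "((\<lambda>e. \<integral>y. f y * normal_density x e y \<partial>lborel) \<longlongrightarrow> f x) (at_right 0)"
proof (rule order_tendstoI)
  fix a assume "a < f x"
  then show "\<forall>\<^sub>F e in at_right 0. a < (\<integral>y. f y * normal_density x e y \<partial>lborel)"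
    by (rule eventually_gaussian_smoothing_gt[OF f cont])
next
  fix a assume "f x < a"
  then have "\<forall>\<^sub>F e in at_right 0. - a < (\<integral>y. - f y * normal_density x e y \<partial>lborel)"
    using f cont by (intro eventually_gaussian_smoothing_gt) (auto intro: isCont_minus)
  then show "\<forall>\<^sub>F e in at_right 0. (\<integral>y. f y * normal_density x e y \<partial>lborel) < a"
    by simp
qed

lemma abs_le_fourier_integral_bound:
  fixes f G :: "real \<Rightarrow> real"
  assumes f: "integrable lborel f" and cont: "isCont f x" and G: "integrable lborel G"
    and fourier_le: "\<And>z. norm (\<integral>y. cis (z * y) * complex_of_real (f y) \<partial>lborel) \<le> G z"
  shows "\<bar>f x\<bar> \<le> (\<integral>z. G z \<partial>lborel) / (2 * pi)"
proof (rule tendsto_le[OF trivial_limit_at_right_real])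
  show "((\<lambda>e. \<bar>\<integral>y. f y * normal_density x e y \<partial>lborel\<bar>) \<longlongrightarrow> \<bar>f x\<bar>) (at_right 0)"
    by (intro tendsto_rabs gaussian_smoothing_tendsto f cont)
  show "\<forall>\<^sub>F e in at_right 0. \<bar>\<integral>y. f y * normal_density x e y \<partial>lborel\<bar> \<le> (\<integral>z. G z \<partial>lborel) / (2 * pi)"
    using eventually_at_right_less[of 0]
    by eventually_elim (rule gaussian_smoothing_bound[OF f _ G fourier_le])
qed (rule tendsto_const)

section \<open>The Levy exponent of the stable Levy measure\<close>

lemma cos_gaussian_integral:
  fixes r u :: real
  assumes r: "r > 0"
  shows "integrable lborel (\<lambda>z. cos (z * u) * exp (- (r * z\<^sup>2)))"
    and "(\<integral>z. cos (z * u) * exp (- (r * z\<^sup>2)) \<partial>lborel) = sqrt (pi / r) * exp (- (u\<^sup>2 / (4 * r)))"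
proof -
  define e where "e = sqrt (2 * r)"
  have e: "e > 0"
    using r by (simp add: e_def)
  have gauss_eq: "exp (- ((e * z)\<^sup>2 / 2)) = exp (- (r * z\<^sup>2))" for z
    using r by (simp add: e_def power_mult_distrib)
  have int: "integrable lborel (\<lambda>z. exp (- (r * z\<^sup>2)))"
    using integrable_gaussian[OF e] by (simp add: gauss_eq)
  then show "integrable lborel (\<lambda>z. cos (z * u) * exp (- (r * z\<^sup>2)))"
    by (rule Bochner_Integration.integrable_bound) (auto simp: abs_mult)
  have "integrable lborel (\<lambda>z. cis (z * u) * complex_of_real (exp (- (e * z)\<^sup>2 / 2)))"
    using integrable_cis_mult[OF integrable_gaussian[OF e], of u] by (simp add: mult.commute)
  then have "(\<integral>z. Re (cis (z * u) * complex_of_real (exp (- (e * z)\<^sup>2 / 2))) \<partial>lborel) = 2 * pi * normal_density 0 e u"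
    by (simp only: integral_Re fourier_transform_gaussian[OF e] Re_complex_of_real)
  then have "(\<integral>z. cos (z * u) * exp (- (r * z\<^sup>2)) \<partial>lborel) = 2 * pi * normal_density 0 e u"
    by (simp add: gauss_eq)
  also have "\<dots> = sqrt (pi / r) * exp (- (u\<^sup>2 / (4 * r)))"
  proof -
    have "2 * pi / sqrt (2 * pi * e\<^sup>2) = sqrt (pi / r)"
      using r by (simp add: e_def real_sqrt_divide real_sqrt_mult field_simps)
    then show ?thesis
      using r by (simp add: normal_density_def e_def) (metis times_divide_eq_left)
  qed
  finally show "(\<integral>z. cos (z * u) * exp (- (r * z\<^sup>2)) \<partial>lborel) = sqrt (pi / r) * exp (- (u\<^sup>2 / (4 * r)))" .
qed

lemma nn_integral_one_minus_cos_gaussian: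
  fixes r :: real
  assumes r: "r > 0"
  shows "(\<integral>\<^sup>+u. ennreal ((1 - cos u) * exp (- (r * u\<^sup>2))) \<partial>lborel)
       = ennreal (sqrt (pi / r) * (1 - exp (- (1 / (4 * r)))))"
proof -
  note cos0 = cos_gaussian_integral[OF r, of 0] and cos1 = cos_gaussian_integral[OF r, of 1]
  have int: "integrable lborel (\<lambda>u. exp (- (r * u\<^sup>2)) - cos u * exp (- (r * u\<^sup>2)))"
    using cos0(1) cos1(1) by (intro Bochner_Integration.integrable_diff) auto
  have "(\<integral>\<^sup>+u. ennreal ((1 - cos u) * exp (- (r * u\<^sup>2))) \<partial>lborel)
      = ennreal (\<integral>u. exp (- (r * u\<^sup>2)) - cos u * exp (- (r * u\<^sup>2)) \<partial>lborel)"
    by (subst nn_integral_eq_integral[OF int, symmetric]) (auto simp: algebra_simps)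
  also have "(\<integral>u. exp (- (r * u\<^sup>2)) - cos u * exp (- (r * u\<^sup>2)) \<partial>lborel)
      = sqrt (pi / r) * (1 - exp (- (1 / (4 * r))))"
    using cos0 cos1 by (simp add: algebra_simps)
  finally show ?thesis .
qed

lemma nn_integral_powr_exp_eq_Gamma:
  fixes a b :: real
  assumes a: "a > 0" and b: "b > 0"
  shows "(\<integral>\<^sup>+r. ennreal (indicator {0..} r * r powr (a-1) * exp (-(b*r))) \<partial>lborel)
        = ennreal (Gamma a * b powr (-a))"
proof -
  define F where "F = (\<lambda>r::real. ennreal (indicator {0..} r * r powr (a-1) * exp (-(b*r))))"
  have "(\<integral>\<^sup>+r. F r \<partial>lborel) = ennreal \<bar>1/b\<bar> * (\<integral>\<^sup>+x. F (0 + 1/b * x) \<partial>lborel)"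
    by (rule nn_integral_real_affine) (use b in \<open>auto simp: F_def\<close>)
  also have "(\<lambda>x. F (0 + 1/b * x)) = (\<lambda>x. ennreal (b powr (1-a)) * ennreal (indicator {0..} x * x powr (a-1) / exp x))"
  proof
    fix x :: real
    show "F (0 + 1/b * x) = ennreal (b powr (1-a)) * ennreal (indicator {0..} x * x powr (a-1) / exp x)"
    proof (cases "x \<ge> 0")
      case True
      have "(x/b) powr (a-1) = x powr (a-1) / b powr (a-1)" using True b by (simp add: powr_divide)
      also have "\<dots> = b powr (1-a) * x powr (a-1)" using b by (simp add: powr_minus_divide[symmetric] powr_diff mult_ac)
      finally have e: "(x/b) powr (a-1) = b powr (1-a) * x powr (a-1)" .
      show ?thesis using True b
        by (simp add: F_def e ennreal_mult'[symmetric] exp_minus field_simps)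
    next
      case False
      then show ?thesis using b by (simp add: F_def indicator_def zero_le_divide_iff)
    qed
  qed
  also have "(\<integral>\<^sup>+x. ennreal (b powr (1-a)) * ennreal (indicator {0..} x * x powr (a-1) / exp x) \<partial>lborel)
     = ennreal (b powr (1-a)) * ennreal (Gamma a)"
    by (subst nn_integral_cmult) (auto simp: Gamma_conv_nn_integral_real[OF a])
  finally have "(\<integral>\<^sup>+r. F r \<partial>lborel) = ennreal (1/b * (b powr (1-a) * Gamma a))"
    using b a Gamma_real_pos[OF a] by (simp add: ennreal_mult'[symmetric] mult.assoc)
  also have "1/b * (b powr (1-a) * Gamma a) = Gamma a * b powr (-a)"
    using b by (simp add: powr_diff field_simps powr_minus)
  finally show ?thesis by (simp add: F_def)
qed

lemma nn_integral_exp_neg_interval: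
  fixes c :: real
  assumes c: "c \<ge> 0"
  shows "(\<integral>\<^sup>+w. ennreal (indicator {0..c} w * exp (-w)) \<partial>lborel) = ennreal (1 - exp (-c))"
proof -
  have "((\<lambda>w. exp (-w)) has_integral ((- exp (-c)) - (- exp (-0)))) {0..c}"
    by (rule fundamental_theorem_of_calculus[OF c])
       (auto intro!: derivative_eq_intros simp: has_real_derivative_iff_has_vector_derivative[symmetric])
  then have "((\<lambda>w. exp (-w)) has_integral (1 - exp (-c))) {0..c}" by simp
  from nn_integral_has_integral_lebesgue[OF _ this] show ?thesis by simp
qed

lemma nn_integral_powr_interval:
  fixes c b :: real
  assumes c: "c \<ge> 0" and b: "b > 0"
  shows "(\<integral>\<^sup>+r. ennreal (indicator {0..c} r * r powr (b-1)) \<partial>lborel) = ennreal (c powr b / b)"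
proof -
  have "((\<lambda>r. r powr (b-1)) has_integral (c powr (b-1+1) / (b-1+1))) {0..c}"
    by (rule has_integral_powr_from_0) (use b c in auto)
  then have "((\<lambda>r. r powr (b-1)) has_integral (c powr b / b)) {0..c}" by simp
  from nn_integral_has_integral_lebesgue[OF _ this] show ?thesis by simp
qed

lemma nn_integral_powr_one_minus_exp_inverse:
  fixes b :: real
  assumes b0: "0 < b" and b1: "b < 1"
  shows "(\<integral>\<^sup>+r. ennreal (indicator {0<..} r * r powr (b-1) * (1 - exp (-(1/(4*r))))) \<partial>lborel)
       = ennreal (4 powr (-b) / b * Gamma (1-b))"
proof -
  \<comment> \<open>\<open>1 - exp (- 1 / (4 r))\<close> is the integral of \<open>exp (- w)\<close> over \<open>[0, 1 / (4 r)]\<close>; swapping the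
    order of integration leaves a Gamma integral in \<open>w\<close>.\<close>
  define H where "H = (\<lambda>r w::real. ennreal (if 0 < r \<and> 0 \<le> w \<and> 4*r*w \<le> 1 then r powr (b-1) * exp (-w) else 0))"
  have H_measurable: "(\<lambda>(r,w). H r w) \<in> borel_measurable (lborel \<Otimes>\<^sub>M lborel)"
    unfolding H_def by measurable
  have w_integral_eq: "ennreal (indicator {0<..} r * r powr (b-1) * (1 - exp (-(1/(4*r))))) = (\<integral>\<^sup>+w. H r w \<partial>lborel)" for r
  proof (cases "r > 0")
    case True
    have "(\<integral>\<^sup>+w. H r w \<partial>lborel) = (\<integral>\<^sup>+w. ennreal (r powr (b-1)) * ennreal (indicator {0..1/(4*r)} w * exp (-w)) \<partial>lborel)"
      using True by (intro nn_integral_cong) (auto simp: H_def indicator_def ennreal_mult'[symmetric] field_simps)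
    also have "\<dots> = ennreal (r powr (b-1)) * ennreal (1 - exp (-(1/(4*r))))"
      using True by (subst nn_integral_cmult) (auto simp: nn_integral_exp_neg_interval)
    finally show ?thesis using True by (simp add: ennreal_mult'[symmetric])
  next
    case False
    then show ?thesis by (simp add: H_def)
  qed
  have r_integral_eq: "(\<integral>\<^sup>+r. H r w \<partial>lborel) = ennreal (indicator {0<..} w * 4 powr (-b) / b * (w powr (-b) / exp w))" if w: "w \<noteq> 0" for w
  proof (cases "w > 0")
    case True
    have "(\<integral>\<^sup>+r. H r w \<partial>lborel) = (\<integral>\<^sup>+r. ennreal (exp (-w)) * ennreal (indicator {0..1/(4*w)} r * r powr (b-1)) \<partial>lborel)"
      using True by (intro nn_integral_cong) (auto simp: H_def indicator_def ennreal_mult'[symmetric] field_simps)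
    also have "\<dots> = ennreal (exp (-w)) * ennreal ((1/(4*w)) powr b / b)"
      using True b0 by (subst nn_integral_cmult) (auto simp: nn_integral_powr_interval)
    also have "(1/(4*w)) powr b = 4 powr (-b) * w powr (-b)"
      using True by (simp add: powr_divide powr_mult powr_minus_divide)
    finally show ?thesis using True b0 by (simp add: ennreal_mult'[symmetric] exp_minus field_simps)
  next
    case False
    then have "w < 0" using w by simp
    then show ?thesis by (simp add: H_def)
  qed
  have "(\<integral>\<^sup>+r. ennreal (indicator {0<..} r * r powr (b-1) * (1 - exp (-(1/(4*r))))) \<partial>lborel)
      = (\<integral>\<^sup>+r. \<integral>\<^sup>+w. H r w \<partial>lborel \<partial>lborel)"
    by (simp add: w_integral_eq)
  also have "\<dots> = (\<integral>\<^sup>+w. \<integral>\<^sup>+r. H r w \<partial>lborel \<partial>lborel)"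
    using lborel_pair.Fubini'[OF H_measurable] by simp
  also have "\<dots> = (\<integral>\<^sup>+w. ennreal (4 powr (-b) / b) * ennreal (indicator {0..} w * w powr ((1-b) - 1) / exp w) \<partial>lborel)"
  proof (rule nn_integral_cong_AE)
    show "AE w in lborel. (\<integral>\<^sup>+r. H r w \<partial>lborel) = ennreal (4 powr (-b) / b) * ennreal (indicator {0..} w * w powr ((1-b) - 1) / exp w)"
      using AE_lborel_singleton[of 0]
    proof eventually_elim
      case (elim w)
      then show ?case using b0 by (simp add: r_integral_eq ennreal_mult'[symmetric] indicator_def)
    qed
  qed
  also have "\<dots> = ennreal (4 powr (-b) / b) * ennreal (Gamma (1-b))"
    using b1 by (subst nn_integral_cmult) (auto simp: Gamma_conv_nn_integral_real)
  also have "\<dots> = ennreal (4 powr (-b) / b * Gamma (1-b))"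
    using b0 b1 by (simp add: ennreal_mult'[symmetric])
  finally show ?thesis .
qed

lemma calA_neg_eq:
  fixes \<alpha> :: real
  assumes "0 < \<alpha>" and "\<alpha> < 2"
  shows "calA (- \<alpha>) 1 = Gamma ((1 + \<alpha>) / 2) * (\<alpha> / 2) / (sqrt pi * 2 powr (- \<alpha>) * Gamma (1 - \<alpha> / 2))"
proof -
  have "- \<alpha> / 2 \<notin> \<int>\<^sub>\<le>\<^sub>0"
  proof
    assume "- \<alpha> / 2 \<in> \<int>\<^sub>\<le>\<^sub>0"
    then obtain n :: int where n: "- \<alpha> / 2 = of_int n"
      by (auto elim!: nonpos_Ints_cases)
    then have "of_int (- 1) < (of_int n :: real)" "(of_int n :: real) < of_int 0"
      using assms by simp_all
    then have "- 1 < n" "n < 0"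
      by (simp_all only: of_int_less_iff)
    then show False
      by simp
  qed
  then have "Gamma (1 - \<alpha> / 2) = (- \<alpha> / 2) * Gamma (- \<alpha> / 2)"
    using Gamma_plus1[of "- \<alpha> / 2"] by (simp add: add.commute)
  then have "Gamma (- \<alpha> / 2) = - Gamma (1 - \<alpha> / 2) / (\<alpha> / 2)"
    using assms by (simp add: field_simps)
  moreover have "Gamma (1 - \<alpha> / 2) > 0"
    using assms by (intro Gamma_real_pos) simp
  ultimately have "\<bar>Gamma (- \<alpha> / 2)\<bar> = Gamma (1 - \<alpha> / 2) / (\<alpha> / 2)"
    using assms by simp
  then show ?thesis
    unfolding calA_def by (simp add: powr_half_sqrt field_simps)
qed

lemma nn_integral_powr_exp_square_eq_Gamma:
  fixes a u :: real
  assumes a: "0 < a" and u: "u \<noteq> 0"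
  shows "(\<integral>\<^sup>+r. ennreal (indicator {0..} r * r powr (a - 1) * exp (- (u\<^sup>2 * r))) \<partial>lborel)
       = ennreal (Gamma a * \<bar>u\<bar> powr (- 2 * a))"
proof -
  have "(u\<^sup>2) powr (- a) = (\<bar>u\<bar> powr 2) powr (- a)"
    by simp
  also have "\<dots> = \<bar>u\<bar> powr (2 * - a)"
    by (rule powr_powr)
  finally have "(u\<^sup>2) powr (- a) = \<bar>u\<bar> powr (- 2 * a)"
    by simp
  then show ?thesis
    using nn_integral_powr_exp_eq_Gamma[OF a, of "u\<^sup>2"] u by simp
qed

lemma nn_integral_one_minus_cos_gaussian_powr:
  fixes a r :: real
  assumes r: "r > 0"
  shows "(\<integral>\<^sup>+u. ennreal (1 - cos u) * ennreal (r powr (a - 1) * exp (- (u\<^sup>2 * r))) \<partial>lborel)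
       = ennreal (sqrt pi * r powr (a - 3 / 2) * (1 - exp (- (1 / (4 * r)))))"
proof -
  have "r powr (a - 1) * sqrt (pi / r) = sqrt pi * (r powr (a - 1) * r powr (- 1 / 2))"
    using r by (simp add: real_sqrt_divide powr_minus_divide powr_half_sqrt[symmetric] divide_simps)
  also have "r powr (a - 1) * r powr (- 1 / 2) = r powr (a - 3 / 2)"
    by (simp add: powr_add[symmetric])
  finally have powr_eq: "r powr (a - 1) * sqrt (pi / r) = sqrt pi * r powr (a - 3 / 2)" .
  have "(\<integral>\<^sup>+u. ennreal (1 - cos u) * ennreal (r powr (a - 1) * exp (- (u\<^sup>2 * r))) \<partial>lborel)
      = ennreal (r powr (a - 1)) * (\<integral>\<^sup>+u. ennreal ((1 - cos u) * exp (- (r * u\<^sup>2))) \<partial>lborel)"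
    by (subst nn_integral_cmult[symmetric]) (auto intro!: nn_integral_cong simp: ennreal_mult'[symmetric] mult_ac)
  also have "\<dots> = ennreal (sqrt pi * r powr (a - 3 / 2) * (1 - exp (- (1 / (4 * r)))))"
    using r by (simp add: nn_integral_one_minus_cos_gaussian ennreal_mult'[symmetric] powr_eq[symmetric] mult.assoc)
  finally show ?thesis .
qed

lemma nn_integral_one_minus_cos_powr:
  fixes \<alpha> :: real
  assumes \<alpha>: "0 < \<alpha>" "\<alpha> < 2"
  shows "(\<integral>\<^sup>+u. ennreal ((1 - cos u) * \<bar>u\<bar> powr (- 1 - \<alpha>)) \<partial>lborel) = ennreal (1 / calA (- \<alpha>) 1)"
proof -
  define a where "a = (1 + \<alpha>) / 2"
  have a: "0 < a" and Gamma_a: "0 < Gamma a"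
    using \<alpha> by (simp_all add: a_def)
  \<comment> \<open>Subordination: \<open>Gamma a * \<bar>u\<bar> powr (- 1 - \<alpha>)\<close> is the integral of \<open>r powr (a - 1) * exp (- u\<^sup>2 r)\<close>
    over \<open>r \<ge> 0\<close>; integrating in \<open>u\<close> first gives Gaussian integrals.\<close>
  define H where "H u r = ennreal (1 - cos u) * ennreal (indicator {0..} r * r powr (a - 1) * exp (- (u\<^sup>2 * r)))"
    for u r :: real
  have H_measurable: "(\<lambda>(u, r). H u r) \<in> borel_measurable (lborel \<Otimes>\<^sub>M lborel)"
    unfolding H_def by measurable
  have r_integral: "(\<integral>\<^sup>+r. H u r \<partial>lborel) = ennreal (Gamma a) * ennreal ((1 - cos u) * \<bar>u\<bar> powr (- 1 - \<alpha>))" for u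
  proof (cases "u = 0")
    case False
    have "- 2 * a = - 1 - \<alpha>"
      by (simp add: a_def)
    then have powr_eq: "\<bar>u\<bar> powr (- 2 * a) = \<bar>u\<bar> powr (- 1 - \<alpha>)"
      by (simp only:)
    have "(\<integral>\<^sup>+r. H u r \<partial>lborel)
        = ennreal (1 - cos u) * (\<integral>\<^sup>+r. ennreal (indicator {0..} r * r powr (a - 1) * exp (- (u\<^sup>2 * r))) \<partial>lborel)"
      unfolding H_def by (rule nn_integral_cmult) measurable
    also have "\<dots> = ennreal (1 - cos u) * ennreal (Gamma a * \<bar>u\<bar> powr (- 1 - \<alpha>))"
      unfolding nn_integral_powr_exp_square_eq_Gamma[OF a False] powr_eq ..
    finally show ?thesis
      using Gamma_a by (simp add: ennreal_mult'[symmetric] mult_ac)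
  qed (simp add: H_def)
  have u_integral: "(\<integral>\<^sup>+u. H u r \<partial>lborel)
      = ennreal (sqrt pi) * ennreal (indicator {0<..} r * r powr (\<alpha> / 2 - 1) * (1 - exp (- (1 / (4 * r)))))"
    if "r \<noteq> 0" for r
  proof (cases "r > 0")
    case True
    have "a - 3 / 2 = \<alpha> / 2 - 1"
      by (simp add: a_def field_simps)
    then show ?thesis
      using True nn_integral_one_minus_cos_gaussian_powr[OF True, of a]
      by (simp add: H_def ennreal_mult'[symmetric] mult.assoc)
  next
    case False
    then show ?thesis
      using that by (simp add: H_def)
  qed
  define K where "K = 4 powr (- (\<alpha> / 2)) / (\<alpha> / 2) * Gamma (1 - \<alpha> / 2)"
  have "ennreal (Gamma a) * (\<integral>\<^sup>+u. ennreal ((1 - cos u) * \<bar>u\<bar> powr (- 1 - \<alpha>)) \<partial>lborel)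
      = (\<integral>\<^sup>+u. \<integral>\<^sup>+r. H u r \<partial>lborel \<partial>lborel)"
    by (simp add: r_integral nn_integral_cmult)
  also have "\<dots> = (\<integral>\<^sup>+r. \<integral>\<^sup>+u. H u r \<partial>lborel \<partial>lborel)"
    using lborel_pair.Fubini'[OF H_measurable] by simp
  also have "\<dots> = (\<integral>\<^sup>+r. ennreal (sqrt pi) * ennreal (indicator {0<..} r * r powr (\<alpha> / 2 - 1) * (1 - exp (- (1 / (4 * r))))) \<partial>lborel)"
    using AE_lborel_singleton[of 0] by (intro nn_integral_cong_AE) (auto elim!: eventually_mono simp: u_integral)
  also have "\<dots> = ennreal (sqrt pi) * ennreal K"
    using \<alpha> unfolding K_def by (subst nn_integral_cmult) (simp_all add: nn_integral_powr_one_minus_exp_inverse)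
  finally have "ennreal (1 / Gamma a) * (ennreal (Gamma a) * (\<integral>\<^sup>+u. ennreal ((1 - cos u) * \<bar>u\<bar> powr (- 1 - \<alpha>)) \<partial>lborel))
      = ennreal (1 / Gamma a) * (ennreal (sqrt pi) * ennreal K)"
    by simp
  then have "(\<integral>\<^sup>+u. ennreal ((1 - cos u) * \<bar>u\<bar> powr (- 1 - \<alpha>)) \<partial>lborel) = ennreal (sqrt pi * K / Gamma a)"
    using Gamma_a \<alpha> by (simp add: mult.assoc[symmetric] ennreal_mult'[symmetric] K_def)
  also have "sqrt pi * K / Gamma a = 1 / calA (- \<alpha>) 1"
  proof -
    have "(4::real) powr (- (\<alpha> / 2)) = (2 powr 2) powr (- (\<alpha> / 2))"
      by simp
    also have "\<dots> = 2 powr (- \<alpha>)"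
      by (subst powr_powr) simp
    finally have "(4::real) powr (- (\<alpha> / 2)) = 2 powr (- \<alpha>)" .
    moreover have "Gamma (1 - \<alpha> / 2) > 0"
      using \<alpha> by (intro Gamma_real_pos) simp
    ultimately show ?thesis
      using \<alpha> Gamma_a by (simp add: calA_neg_eq K_def a_def field_simps)
  qed
  finally show ?thesis .
qed

lemma calA_neg_pos:
  fixes \<alpha> :: real
  assumes "0 < \<alpha>" and "\<alpha> < 2"
  shows "0 < calA (- \<alpha>) 1"
  using assms by (simp add: calA_neg_eq)

lemma nn_integral_stable_levy_measure_one_minus_cos:
  fixes \<alpha> z :: real
  assumes a0: "0 < \<alpha>" and a2: "\<alpha> < 2"
  shows "(\<integral>\<^sup>+x. ennreal (1 - cos (z * x)) \<partial>stable_levy_measure \<alpha>) = ennreal (\<bar>z\<bar> powr \<alpha>)"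
proof -
  define A where "A = calA (- \<alpha>) 1"
  have A: "A > 0"
    unfolding A_def using a0 a2 by (rule calA_neg_pos)
  define g where "g x = ennreal ((1 - cos (z * x)) * (if x = 0 then 0 else A * \<bar>x\<bar> powr (- 1 - \<alpha>)))" for x
  have "(\<integral>\<^sup>+x. ennreal (1 - cos (z * x)) \<partial>stable_levy_measure \<alpha>) = (\<integral>\<^sup>+x. g x \<partial>lborel)"
    unfolding stable_levy_measure_def g_def A_def
    by (subst nn_integral_density) (auto simp: ennreal_mult'[symmetric] mult.commute intro!: nn_integral_cong)
  also have "\<dots> = ennreal (\<bar>z\<bar> powr \<alpha>)"
  proof (cases "z = 0")
    case True
    then show ?thesis by (simp add: g_def)
  next
    case False
    have "(\<integral>\<^sup>+x. g x \<partial>lborel) = ennreal \<bar>1 / z\<bar> * (\<integral>\<^sup>+u. g (0 + 1 / z * u) \<partial>lborel)"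
      by (rule nn_integral_real_affine) (use False in \<open>auto simp: g_def\<close>)
    also have "(\<lambda>u. g (0 + 1 / z * u)) = (\<lambda>u. ennreal (A * \<bar>z\<bar> powr (1 + \<alpha>)) * ennreal ((1 - cos u) * \<bar>u\<bar> powr (- 1 - \<alpha>)))"
    proof
      fix u :: real
      have "\<bar>z\<bar> powr (- 1 - \<alpha>) = inverse (\<bar>z\<bar> powr (1 + \<alpha>))"
        using powr_minus[of "\<bar>z\<bar>" "1 + \<alpha>"] by simp
      then have "\<bar>u / z\<bar> powr (- 1 - \<alpha>) = \<bar>u\<bar> powr (- 1 - \<alpha>) * \<bar>z\<bar> powr (1 + \<alpha>)"
        unfolding abs_divide powr_divide by (simp add: divide_inverse)
      then show "g (0 + 1 / z * u) = ennreal (A * \<bar>z\<bar> powr (1 + \<alpha>)) * ennreal ((1 - cos u) * \<bar>u\<bar> powr (- 1 - \<alpha>))"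
        using False A by (simp add: g_def ennreal_mult'[symmetric] mult_ac)
    qed
    also have "(\<integral>\<^sup>+u. ennreal (A * \<bar>z\<bar> powr (1 + \<alpha>)) * ennreal ((1 - cos u) * \<bar>u\<bar> powr (- 1 - \<alpha>)) \<partial>lborel)
        = ennreal (A * \<bar>z\<bar> powr (1 + \<alpha>)) * ennreal (1 / A)"
      by (subst nn_integral_cmult) (auto simp: nn_integral_one_minus_cos_powr[OF a0 a2] A_def)
    also have "ennreal \<bar>1 / z\<bar> * (ennreal (A * \<bar>z\<bar> powr (1 + \<alpha>)) * ennreal (1 / A)) = ennreal (\<bar>z\<bar> powr \<alpha>)"
      using False A by (simp add: ennreal_mult'[symmetric] powr_add)
    finally show ?thesis .
  qed
  finally show ?thesis .
qed

section \<open>Symmetric Levy measures and their finite perturbations\<close>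

lemma one_minus_cos_le_square: "1 - cos x \<le> x\<^sup>2 / 2" for x :: real
proof -
  have "1 - cos x = 2 * (sin (x / 2))\<^sup>2"
    using cos_double_sin[of "x / 2"] by simp
  also have "\<dots> \<le> 2 * (x / 2)\<^sup>2"
    using abs_sin_x_le_abs_x[of "x / 2"] unfolding abs_le_square_iff by simp
  finally show ?thesis by (simp add: power_divide)
qed

lemma abs_sin_minus_le_square: "\<bar>sin x - x\<bar> \<le> x\<^sup>2 / 2" for x :: real
  using Maclaurin_sin_bound[of x 2] by (simp add: numeral_2_eq_2 sin_coeff_def)

lemma integrable_levy_measure:
  fixes h :: "real \<Rightarrow> real"
  assumes \<nu>: "is_levy_measure \<nu>" and [measurable]: "h \<in> borel_measurable borel"
    and h_le: "\<And>x. \<bar>h x\<bar> \<le> c * min 1 (x\<^sup>2)"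
  shows "integrable \<nu> h"
proof -
  have sets: "sets \<nu> = sets borel" and fin: "(\<integral>\<^sup>+ x. ennreal (min 1 (x\<^sup>2)) \<partial>\<nu>) < \<infinity>"
    using \<nu> unfolding is_levy_measure_def by auto
  have "integrable \<nu> (\<lambda>x. min 1 (x\<^sup>2))"
    using fin by (intro integrableI_bounded) (auto simp: measurable_cong_sets[OF sets refl])
  then show ?thesis
    by (rule Bochner_Integration.integrable_bound[OF integrable_mult_right[where c = c]])
       (use h_le in \<open>auto simp: measurable_cong_sets[OF sets refl] intro!: order_trans[OF _ abs_ge_self]\<close>)
qed

lemma distr_uminus_symmetric_measure:
  assumes sets: "sets \<nu> = sets borel" and sym: "symmetric_measure \<nu>"
  shows "distr \<nu> borel uminus = (\<nu> :: real measure)"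
proof (rule measure_eqI)
  show "sets (distr \<nu> borel uminus) = sets \<nu>"
    using sets by simp
  fix A assume "A \<in> sets (distr \<nu> borel uminus)"
  then have A: "A \<in> sets borel" by simp
  have "uminus -` A \<inter> space \<nu> = uminus ` A"
    using sets_eq_imp_space_eq[OF sets] by (auto simp: image_iff) (metis minus_minus)
  moreover have "uminus \<in> measurable \<nu> borel"
    by (simp add: measurable_cong_sets[OF sets refl])
  ultimately show "emeasure (distr \<nu> borel uminus) A = emeasure \<nu> A"
    using A sym by (simp add: emeasure_distr symmetric_measure_def)
qed

lemma integral_odd_symmetric_measure:
  fixes h :: "real \<Rightarrow> real"
  assumes sets: "sets \<nu> = sets borel" and sym: "symmetric_measure \<nu>"
    and [measurable]: "h \<in> borel_measurable borel" and odd: "\<And>x. h (- x) = - h x"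
  shows "(\<integral>x. h x \<partial>\<nu>) = 0"
proof -
  have "(\<integral>x. h x \<partial>\<nu>) = (\<integral>x. h x \<partial>distr \<nu> borel uminus)"
    by (simp add: distr_uminus_symmetric_measure[OF sets sym])
  also have "\<dots> = (\<integral>x. h (- x) \<partial>\<nu>)"
    by (rule integral_distr) (simp_all add: measurable_cong_sets[OF sets refl])
  finally show ?thesis
    by (simp add: odd)
qed

lemma abs_one_minus_cos_le_min: "\<bar>1 - cos (z * x)\<bar> \<le> (2 + z\<^sup>2) * min 1 (x\<^sup>2)" for x z :: real
proof -
  have nonneg: "0 \<le> 1 - cos (z * x)"
    by simp
  show ?thesis
  proof (cases "x\<^sup>2 \<le> 1")
    case True
    have "1 - cos (z * x) \<le> (z * x)\<^sup>2 / 2"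
      by (rule one_minus_cos_le_square)
    also have "\<dots> \<le> (2 + z\<^sup>2) * x\<^sup>2"
      using zero_le_power2[of "z * x"] zero_le_power2[of x] by (simp add: algebra_simps)
    finally show ?thesis
      using True nonneg by (simp add: min_def)
  next
    case False
    then show ?thesis
      using False by (simp add: min_def) (use cos_ge_minus_one[of "z * x"] zero_le_power2[of z] in linarith)
  qed
qed

lemma abs_mult_indicator_minus_sin_le_min:
  "\<bar>z * x * indicator {-1<..<1} x - sin (z * x)\<bar> \<le> (1 + z\<^sup>2) * min 1 (x\<^sup>2)" for x z :: real
proof (cases "x \<in> {-1<..<1}")
  case True
  then have x_sq: "x\<^sup>2 \<le> 1"
    by (simp add: abs_square_le_1 abs_le_iff)
  have "\<bar>z * x * indicator {-1<..<1} x - sin (z * x)\<bar> = \<bar>sin (z * x) - z * x\<bar>"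
    using True by (simp add: abs_minus_commute)
  also have "\<dots> \<le> (z * x)\<^sup>2 / 2"
    by (rule abs_sin_minus_le_square)
  also have "\<dots> \<le> (1 + z\<^sup>2) * x\<^sup>2"
    using zero_le_power2[of "z * x"] zero_le_power2[of x] by (simp add: algebra_simps)
  finally show ?thesis
    using x_sq by (simp add: min_def)
next
  case False
  then have "1 \<le> \<bar>x\<bar>"
    by auto
  then have "1 \<le> x\<^sup>2"
    using one_le_power[of "\<bar>x\<bar>" 2] by simp
  moreover have "\<bar>z * x * indicator {-1<..<1} x - sin (z * x)\<bar> \<le> 1"
    using False by simp
  ultimately show ?thesis
    by (simp add: min_def) (use zero_le_power2[of z] in linarith)
qed

lemma integrable_one_minus_cos_levy_measure:
  assumes "is_levy_measure \<nu>"
  shows "integrable \<nu> (\<lambda>x. 1 - cos (z * x))"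
  by (rule integrable_levy_measure[OF assms _ abs_one_minus_cos_le_min]) simp

lemma levy_exponent_symmetric:
  assumes \<nu>: "is_levy_measure \<nu>" and sym: "symmetric_measure \<nu>"
  shows "levy_exponent \<nu> z = complex_of_real (\<integral>x. 1 - cos (z * x) \<partial>\<nu>)"
proof -
  have sets: "sets \<nu> = sets borel"
    using \<nu> by (simp add: is_levy_measure_def)
  define g where "g x = 1 - cos (z * x)" for x
  define h where "h x = z * x * indicator {-1<..<1} x - sin (z * x)" for x
  have h_le: "\<bar>h x\<bar> \<le> (1 + z\<^sup>2) * min 1 (x\<^sup>2)" for x
    unfolding h_def by (rule abs_mult_indicator_minus_sin_le_min)
  have int_g: "integrable \<nu> g"
    unfolding g_def by (rule integrable_one_minus_cos_levy_measure[OF \<nu>])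
  have int_h: "integrable \<nu> h"
    by (rule integrable_levy_measure[OF \<nu> _ h_le]) (simp add: h_def)
  have h_odd: "(\<integral>x. h x \<partial>\<nu>) = 0"
    by (rule integral_odd_symmetric_measure[OF sets sym]) (auto simp: h_def indicator_def)
  have "1 - cis (z * x) + \<i> * complex_of_real (z * x * indicator {-1<..<1} x)
      = complex_of_real (g x) + \<i> * complex_of_real (h x)" for x
    by (simp add: g_def h_def complex_eq_iff)
  then have "levy_exponent \<nu> z = (\<integral>x. complex_of_real (g x) + \<i> * complex_of_real (h x) \<partial>\<nu>)"
    unfolding levy_exponent_def by (simp only:)
  also have "\<dots> = complex_of_real (\<integral>x. g x \<partial>\<nu>) + \<i> * complex_of_real (\<integral>x. h x \<partial>\<nu>)"
    using int_g int_h by simp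
  finally show ?thesis
    by (simp add: h_odd g_def)
qed

lemma nn_integral_add_eq_of_emeasure_add_eq:
  assumes sets: "sets M1 = sets N" "sets M2 = sets N" "sets M3 = sets N" "sets M4 = sets N"
    and eq: "\<And>A. A \<in> sets N \<Longrightarrow> emeasure M1 A + emeasure M2 A = emeasure M3 A + emeasure M4 A"
    and u: "u \<in> borel_measurable N"
  shows "(\<integral>\<^sup>+x. u x \<partial>M1) + (\<integral>\<^sup>+x. u x \<partial>M2) = (\<integral>\<^sup>+x. u x \<partial>M3) + (\<integral>\<^sup>+x. u x \<partial>M4)"
  using u
proof (induct rule: borel_measurable_induct)
  have meas: "f \<in> borel_measurable M1" "f \<in> borel_measurable M2"
      "f \<in> borel_measurable M3" "f \<in> borel_measurable M4"
    if "f \<in> borel_measurable N" for f :: "_ \<Rightarrow> ennreal"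
    using that by (simp_all add: measurable_cong_sets[OF sets(1) refl] measurable_cong_sets[OF sets(2) refl]
        measurable_cong_sets[OF sets(3) refl] measurable_cong_sets[OF sets(4) refl])
  {
    case (cong f g)
    have "(\<integral>\<^sup>+x. f x \<partial>M) = (\<integral>\<^sup>+x. g x \<partial>M)" if "sets M = sets N" for M
      using cong(3) sets_eq_imp_space_eq[OF that] by (intro nn_integral_cong) simp
    then show ?case
      using cong(4) sets by simp
  next
    case (set A)
    then show ?case
      using sets eq[OF set] by simp
  next
    case (mult u c)
    then show ?case
      by (simp add: nn_integral_cmult meas distrib_left[symmetric])
  next
    case (add u v)
    then show ?case
      by (simp add: nn_integral_add meas ac_simps)
  next
    case (seq U)
    have inc: "incseq (\<lambda>i. \<integral>\<^sup>+x. U i x \<partial>M)" for M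
      using seq(4) by (auto simp: incseq_def le_fun_def intro!: nn_integral_mono)
    have SUP_eq: "(\<integral>\<^sup>+x. (SUP i. U i) x \<partial>M) = (SUP i. \<integral>\<^sup>+x. U i x \<partial>M)"
      if "\<And>i. U i \<in> borel_measurable M" for M
      using nn_integral_monotone_convergence_SUP[OF seq(4) that] by (simp add: image_comp)
    have "(\<integral>\<^sup>+x. (SUP i. U i) x \<partial>M1) + (\<integral>\<^sup>+x. (SUP i. U i) x \<partial>M2)
        = (SUP i. (\<integral>\<^sup>+x. U i x \<partial>M1) + (\<integral>\<^sup>+x. U i x \<partial>M2))"
      using seq(1) by (simp only: SUP_eq meas ennreal_SUP_add[OF inc inc])
    also have "\<dots> = (SUP i. (\<integral>\<^sup>+x. U i x \<partial>M3) + (\<integral>\<^sup>+x. U i x \<partial>M4))"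
      using seq(3) by simp
    also have "\<dots> = (\<integral>\<^sup>+x. (SUP i. U i) x \<partial>M3) + (\<integral>\<^sup>+x. (SUP i. U i) x \<partial>M4)"
      using seq(1) by (simp only: SUP_eq meas ennreal_SUP_add[OF inc inc])
    finally show ?case .
  }
qed

lemma integral_one_minus_cos_finite_measure:
  assumes fin: "finite_measure \<sigma>" and sets: "sets \<sigma> = sets (borel :: real measure)"
  shows "integrable \<sigma> (\<lambda>x. 1 - cos (z * x))"
    and "0 \<le> (\<integral>x. 1 - cos (z * x) \<partial>\<sigma>)"
    and "(\<integral>x. 1 - cos (z * x) \<partial>\<sigma>) \<le> 2 * measure \<sigma> UNIV"
proof -
  show int: "integrable \<sigma> (\<lambda>x. 1 - cos (z * x))"
    by (rule finite_measure.integrable_const_bound[OF fin, where B = 2])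
       (auto simp: measurable_cong_sets[OF sets refl])
  show "0 \<le> (\<integral>x. 1 - cos (z * x) \<partial>\<sigma>)"
    by (intro integral_nonneg_AE) auto
  have "(\<integral>x. 1 - cos (z * x) \<partial>\<sigma>) \<le> (\<integral>x. 2 \<partial>\<sigma>)"
    using int finite_measure.integrable_const[OF fin] by (intro integral_mono) auto
  then show "(\<integral>x. 1 - cos (z * x) \<partial>\<sigma>) \<le> 2 * measure \<sigma> UNIV"
    using sets_eq_imp_space_eq[OF sets] by simp
qed

lemma levy_exponent_stable_perturbation:
  fixes \<alpha> z :: real and \<nu> \<sigma>p \<sigma>n :: "real measure"
  assumes \<alpha>: "0 < \<alpha>" "\<alpha> < 2"
    and \<nu>: "is_levy_measure \<nu>" and sym: "symmetric_measure \<nu>"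
    and sets_p: "sets \<sigma>p = sets borel" and sets_n: "sets \<sigma>n = sets borel"
    and fin_p: "finite_measure \<sigma>p" and fin_n: "finite_measure \<sigma>n"
    and eq: "\<forall>A\<in>sets borel. emeasure (stable_levy_measure \<alpha>) A + emeasure \<sigma>n A
                       = emeasure \<nu> A + emeasure \<sigma>p A"
  shows "levy_exponent \<nu> z = complex_of_real
           (\<bar>z\<bar> powr \<alpha> + (\<integral>x. 1 - cos (z * x) \<partial>\<sigma>n) - (\<integral>x. 1 - cos (z * x) \<partial>\<sigma>p))"
proof -
  have sets: "sets \<nu> = sets borel"
    using \<nu> by (simp add: is_levy_measure_def)
  note p = integral_one_minus_cos_finite_measure[OF fin_p sets_p, of z]
  note n = integral_one_minus_cos_finite_measure[OF fin_n sets_n, of z]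
  have nn_eq: "(\<integral>\<^sup>+x. ennreal (1 - cos (z * x)) \<partial>M) = ennreal (\<integral>x. 1 - cos (z * x) \<partial>M)"
    if "integrable M (\<lambda>x. 1 - cos (z * x))" for M :: "real measure"
    using that by (intro nn_integral_eq_integral) auto
  have "(\<integral>\<^sup>+x. ennreal (1 - cos (z * x)) \<partial>stable_levy_measure \<alpha>) + (\<integral>\<^sup>+x. ennreal (1 - cos (z * x)) \<partial>\<sigma>n)
      = (\<integral>\<^sup>+x. ennreal (1 - cos (z * x)) \<partial>\<nu>) + (\<integral>\<^sup>+x. ennreal (1 - cos (z * x)) \<partial>\<sigma>p)"
    using eq by (intro nn_integral_add_eq_of_emeasure_add_eq[OF _ sets_n sets sets_p])
       (auto simp: stable_levy_measure_def)
  then have "ennreal (\<bar>z\<bar> powr \<alpha>) + ennreal (\<integral>x. 1 - cos (z * x) \<partial>\<sigma>n)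
      = ennreal (\<integral>x. 1 - cos (z * x) \<partial>\<nu>) + ennreal (\<integral>x. 1 - cos (z * x) \<partial>\<sigma>p)"
    by (simp add: nn_eq p(1) n(1) integrable_one_minus_cos_levy_measure[OF \<nu>]
        nn_integral_stable_levy_measure_one_minus_cos[OF \<alpha>])
  moreover have "0 \<le> (\<integral>x. 1 - cos (z * x) \<partial>\<nu>)"
    by (intro integral_nonneg_AE) auto
  ultimately have "\<bar>z\<bar> powr \<alpha> + (\<integral>x. 1 - cos (z * x) \<partial>\<sigma>n)
      = (\<integral>x. 1 - cos (z * x) \<partial>\<nu>) + (\<integral>x. 1 - cos (z * x) \<partial>\<sigma>p)"
    using p(2) n(2) by (simp flip: ennreal_plus)
  then show ?thesis
    by (simp add: levy_exponent_symmetric[OF \<nu> sym])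
qed

lemma levy_exponent_stable_perturbation_bound:
  fixes \<alpha> z :: real and \<nu> \<sigma>p \<sigma>n :: "real measure"
  assumes \<alpha>: "0 < \<alpha>" "\<alpha> < 2"
    and \<nu>: "is_levy_measure \<nu>" and sym: "symmetric_measure \<nu>"
    and sets_p: "sets \<sigma>p = sets borel" and sets_n: "sets \<sigma>n = sets borel"
    and fin_p: "finite_measure \<sigma>p" and fin_n: "finite_measure \<sigma>n"
    and eq: "\<forall>A\<in>sets borel. emeasure (stable_levy_measure \<alpha>) A + emeasure \<sigma>n A
                       = emeasure \<nu> A + emeasure \<sigma>p A"
  shows "\<exists>w. levy_exponent \<nu> z = complex_of_real (\<bar>z\<bar> powr \<alpha> + w)
           \<and> \<bar>2 * (measure \<sigma>p UNIV - measure \<sigma>n UNIV) + w\<bar> \<le> 2 * (measure \<sigma>p UNIV + measure \<sigma>n UNIV)"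
proof (intro exI conjI)
  define w where "w = (\<integral>x. 1 - cos (z * x) \<partial>\<sigma>n) - (\<integral>x. 1 - cos (z * x) \<partial>\<sigma>p)"
  show "levy_exponent \<nu> z = complex_of_real (\<bar>z\<bar> powr \<alpha> + w)"
    using levy_exponent_stable_perturbation[OF \<alpha> \<nu> sym sets_p sets_n fin_p fin_n eq, of z]
    unfolding w_def by (simp only: add_diff_eq)
  have "0 \<le> measure \<sigma>p UNIV" "0 \<le> measure \<sigma>n UNIV"
    by simp_all
  with integral_one_minus_cos_finite_measure(2,3)[OF fin_p sets_p, of z]
    integral_one_minus_cos_finite_measure(2,3)[OF fin_n sets_n, of z]
  have "2 * (measure \<sigma>p UNIV - measure \<sigma>n UNIV) + w \<le> 2 * (measure \<sigma>p UNIV + measure \<sigma>n UNIV)"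
    "- (2 * (measure \<sigma>p UNIV - measure \<sigma>n UNIV) + w) \<le> 2 * (measure \<sigma>p UNIV + measure \<sigma>n UNIV)"
    unfolding w_def right_diff_distrib distrib_left by linarith+
  then show "\<bar>2 * (measure \<sigma>p UNIV - measure \<sigma>n UNIV) + w\<bar> \<le> 2 * (measure \<sigma>p UNIV + measure \<sigma>n UNIV)"
    by (simp only: abs_le_iff)
qed

section \<open>Estimates for the transition densities\<close>

lemma exp_neg_powr_le:
  fixes t \<alpha> z :: real
  assumes t: "t > 0" and \<alpha>: "1 \<le> \<alpha>"
  shows "exp (- (t * \<bar>z\<bar> powr \<alpha>)) \<le> exp 1 * exp (- (t powr (1 / \<alpha>) * \<bar>z\<bar>))"
proof -
  define u where "u = t powr (1 / \<alpha>) * \<bar>z\<bar>"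
  have "t * \<bar>z\<bar> powr \<alpha> = u powr \<alpha>"
    using t \<alpha> by (simp add: u_def powr_mult powr_powr)
  show ?thesis
  proof (cases "u \<le> 1")
    case True
    have "0 \<le> t * \<bar>z\<bar> powr \<alpha>"
      using t by simp
    then have "exp (- (t * \<bar>z\<bar> powr \<alpha>)) \<le> exp (1 - u)"
      using True by simp
    then show ?thesis
      by (simp add: u_def exp_diff exp_minus field_simps)
  next
    case False
    then have "u powr 1 \<le> u powr \<alpha>"
      using \<alpha> by (intro powr_mono) auto
    then have "exp (- (t * \<bar>z\<bar> powr \<alpha>)) \<le> exp (- u)"
      using \<open>t * \<bar>z\<bar> powr \<alpha> = u powr \<alpha>\<close> False by simp
    also have "\<dots> \<le> exp 1 * exp (- u)"
      by simp
    finally show ?thesis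
      by (simp add: u_def)
  qed
qed

lemma has_bochner_integral_exp_neg_abs:
  fixes s :: real
  assumes s: "s > 0"
  shows "has_bochner_integral lborel (\<lambda>z. exp (- (s * \<bar>z\<bar>))) (2 / s)"
proof (rule has_bochner_integral_nn_integral)
  have half: "(\<integral>\<^sup>+x. ennreal (indicator {0..} x * exp (- (s * x))) \<partial>lborel) = ennreal (1 / s)"
    using nn_integral_has_integral_lebesgue[OF _ has_integral_exp_minus_to_infinity[OF s, of 0]]
    by simp
  have "(\<integral>\<^sup>+x. ennreal (indicator {..<0} x * exp (s * x)) \<partial>lborel)
      = (\<integral>\<^sup>+x. ennreal (indicator {0<..} x * exp (- (s * x))) \<partial>lborel)"
    using nn_integral_real_affine[of "\<lambda>x. ennreal (indicator {..<0} x * exp (s * x))" "- 1" 0]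
    by (simp add: indicator_def)
  also have "\<dots> = (\<integral>\<^sup>+x. ennreal (indicator {0..} x * exp (- (s * x))) \<partial>lborel)"
    using AE_lborel_singleton[of 0] by (intro nn_integral_cong_AE) (auto elim!: eventually_mono simp: indicator_def)
  finally have reflected: "(\<integral>\<^sup>+x. ennreal (indicator {..<0} x * exp (s * x)) \<partial>lborel) = ennreal (1 / s)"
    using half by simp
  have "(\<integral>\<^sup>+z. ennreal (exp (- (s * \<bar>z\<bar>))) \<partial>lborel)
      = (\<integral>\<^sup>+x. ennreal (indicator {0..} x * exp (- (s * x))) + ennreal (indicator {..<0} x * exp (s * x)) \<partial>lborel)"
    by (intro nn_integral_cong) (auto simp: indicator_def)
  also have "\<dots> = ennreal (1 / s) + ennreal (1 / s)"
    by (subst nn_integral_add) (auto simp: half reflected)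
  also have "\<dots> = ennreal (2 / s)"
    using s by (simp flip: ennreal_plus)
  finally show "(\<integral>\<^sup>+z. ennreal (exp (- (s * \<bar>z\<bar>))) \<partial>lborel) = ennreal (2 / s)" .
qed (use s in auto)

lemma abs_one_minus_exp_le: "\<bar>1 - exp (- w)\<bar> \<le> \<bar>w\<bar> * exp \<bar>w\<bar>" for w :: real
proof (cases "w \<ge> 0")
  case True
  have "1 - w \<le> exp (- w)"
    using exp_ge_add_one_self[of "- w"] by simp
  moreover have "w \<le> w * exp w"
    using True by (simp add: mult_le_cancel_left1)
  ultimately show ?thesis
    using True by simp
next
  case False
  have "exp (- w) * (1 + w) \<le> exp (- w) * exp w"
    using exp_ge_add_one_self[of w] by (intro mult_left_mono) auto
  then have "exp (- w) + exp (- w) * w \<le> 1"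
    by (simp add: exp_minus field_simps)
  then have "exp (- w) - 1 \<le> - w * exp (- w)"
    by (simp add: algebra_simps)
  then show ?thesis
    using False by simp
qed

lemma abs_one_minus_exp_mult_le:
  fixes t v K :: real
  assumes t: "0 \<le> t" "t \<le> 1" and v: "\<bar>v\<bar> \<le> K"
  shows "\<bar>1 - exp (- (t * v))\<bar> \<le> K * t * exp K"
proof -
  have "t * \<bar>v\<bar> \<le> t * K"
    using t v by (intro mult_left_mono)
  then have tv: "\<bar>t * v\<bar> \<le> K * t"
    using t by (simp add: abs_mult mult.commute)
  moreover have "K * t \<le> K"
    using t v by (simp add: mult_left_le)
  ultimately have "\<bar>t * v\<bar> * exp \<bar>t * v\<bar> \<le> K * t * exp K"
    by (intro mult_mono) auto
  then show ?thesis
    using abs_one_minus_exp_le[of "t * v"] by linarith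
qed

lemma transition_density_difference_le:
  fixes \<alpha> c K t x :: real and pt pY :: "real \<Rightarrow> real \<Rightarrow> real" and \<psi> :: "real \<Rightarrow> complex"
  assumes \<alpha>: "1 \<le> \<alpha>"
    and pt: "is_transition_density (\<lambda>z. complex_of_real (\<bar>z\<bar> powr \<alpha>)) pt"
    and pY: "is_transition_density \<psi> pY"
    and \<psi>: "\<And>z. \<exists>w. \<psi> z = complex_of_real (\<bar>z\<bar> powr \<alpha> + w) \<and> \<bar>c + w\<bar> \<le> K"
    and t: "0 < t" "t \<le> 1"
  shows "\<bar>pt t x - exp (- c * t) * pY t x\<bar> \<le> K * exp (K + 1) / pi * t powr (1 - 1 / \<alpha>)"
proof -
  have pt_int: "integrable lborel (pt t)" and pt_cont: "continuous_on UNIV (pt t)"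
    and pt_fourier: "\<And>z. (\<integral>y. cis (z * y) * complex_of_real (pt t y) \<partial>lborel)
        = exp (- complex_of_real t * complex_of_real (\<bar>z\<bar> powr \<alpha>))"
    using pt t unfolding is_transition_density_def by auto
  have pY_int: "integrable lborel (pY t)" and pY_cont: "continuous_on UNIV (pY t)"
    and pY_fourier: "\<And>z. (\<integral>y. cis (z * y) * complex_of_real (pY t y) \<partial>lborel) = exp (- complex_of_real t * \<psi> z)"
    using pY t unfolding is_transition_density_def by auto
  define f where "f y = pt t y - exp (- c * t) * pY t y" for y
  have f_int: "integrable lborel f"
    unfolding f_def using pt_int pY_int by (intro Bochner_Integration.integrable_diff integrable_mult_right)
  have f_cont: "isCont f x"
    unfolding f_def using pt_cont pY_cont by (intro continuous_intros) (auto simp: continuous_on_eq_continuous_at)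
  define s where "s = t powr (1 / \<alpha>)"
  have s: "s > 0"
    using t by (simp add: s_def)
  define G where "G z = K * t * exp K * exp 1 * exp (- (s * \<bar>z\<bar>))" for z
  have fourier_le: "norm (\<integral>y. cis (z * y) * complex_of_real (f y) \<partial>lborel) \<le> G z" for z
  proof -
    obtain w where \<psi>z: "\<psi> z = complex_of_real (\<bar>z\<bar> powr \<alpha> + w)" and w: "\<bar>c + w\<bar> \<le> K"
      using \<psi> by blast
    have "(\<integral>y. cis (z * y) * complex_of_real (f y) \<partial>lborel)
        = complex_of_real (exp (- (t * \<bar>z\<bar> powr \<alpha>)) * (1 - exp (- (t * (c + w)))))"
      unfolding f_def integral_cis_mult_diff[OF pt_int pY_int] pt_fourier pY_fourier \<psi>z
      by (simp add: exp_of_real[symmetric] algebra_simps flip: exp_add)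
    then have "norm (\<integral>y. cis (z * y) * complex_of_real (f y) \<partial>lborel)
        = exp (- (t * \<bar>z\<bar> powr \<alpha>)) * \<bar>1 - exp (- (t * (c + w)))\<bar>"
      by (simp only: norm_of_real abs_mult abs_exp_cancel)
    also have "\<dots> \<le> (exp 1 * exp (- (s * \<bar>z\<bar>))) * (K * t * exp K)"
      unfolding s_def using t w
      by (intro mult_mono exp_neg_powr_le \<alpha> abs_one_minus_exp_mult_le) auto
    finally show ?thesis
      by (simp add: G_def mult_ac)
  qed
  have G: "has_bochner_integral lborel G (K * t * exp K * exp 1 * (2 / s))"
    unfolding G_def by (intro has_bochner_integral_mult_right has_bochner_integral_exp_neg_abs s)
  have "\<bar>f x\<bar> \<le> (\<integral>z. G z \<partial>lborel) / (2 * pi)"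
    by (rule abs_le_fourier_integral_bound[OF f_int f_cont integrable.intros[OF G] fourier_le])
  also have "\<dots> = K * exp (K + 1) / pi * (t / s)"
    using G s by (simp add: has_bochner_integral_integral_eq exp_add field_simps)
  also have "t / s = t powr (1 - 1 / \<alpha>)"
    using t by (simp add: s_def powr_diff)
  finally show ?thesis
    by (simp add: f_def)
qed

lemma nn_integral_interval_le_powr:
  fixes f :: "real \<Rightarrow> real" and C \<beta> T :: real
  assumes T: "0 < T" and C: "0 \<le> C" and \<beta>: "0 \<le> \<beta>"
    and f_le: "\<And>t. 0 < t \<Longrightarrow> t \<le> T \<Longrightarrow> \<bar>f t\<bar> \<le> C * t powr \<beta>"
  shows "(\<integral>\<^sup>+t\<in>{0<..T}. ennreal \<bar>f t\<bar> \<partial>lborel) \<le> ennreal (C * T powr (\<beta> + 1))"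
proof -
  have "(\<integral>\<^sup>+t\<in>{0<..T}. ennreal \<bar>f t\<bar> \<partial>lborel) \<le> (\<integral>\<^sup>+t. ennreal (C * T powr \<beta>) * indicator {0<..T} t \<partial>lborel)"
  proof (intro nn_integral_mono)
    fix t
    show "ennreal \<bar>f t\<bar> * indicator {0<..T} t \<le> ennreal (C * T powr \<beta>) * indicator {0<..T} t"
    proof (cases "t \<in> {0<..T}")
      case True
      then have "t powr \<beta> \<le> T powr \<beta>"
        using \<beta> by (intro powr_mono2) auto
      then have "\<bar>f t\<bar> \<le> C * T powr \<beta>"
        using f_le[of t] True C by (meson greaterThanAtMost_iff mult_left_mono order_trans)
      then show ?thesis
        using True by (simp add: ennreal_leI)
    qed simp
  qed
  also have "\<dots> = ennreal (C * T powr \<beta> * T)"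
    using T C by (simp add: nn_integral_cmult_indicator ennreal_mult'[symmetric])
  also have "C * T powr \<beta> * T = C * T powr (\<beta> + 1)"
    using T by (simp add: powr_add)
  finally show ?thesis .
qed

theorem mainTheorem9:
  fixes \<alpha> m M :: real
  assumes "1 \<le> \<alpha>" and "\<alpha> < 2"
  shows "\<exists>C::real. \<forall>(pt :: real \<Rightarrow> real \<Rightarrow> real) (\<nu>Y :: real measure) (pY :: real \<Rightarrow> real \<Rightarrow> real)
            (\<sigma>p :: real measure) (\<sigma>n :: real measure) (t0 :: real) (x :: real).
     is_transition_density (\<lambda>z. complex_of_real (\<bar>z\<bar> powr \<alpha>)) pt \<longrightarrow>
     is_levy_measure \<nu>Y \<longrightarrow> symmetric_measure \<nu>Y \<longrightarrow>
     is_transition_density (levy_exponent \<nu>Y) pY \<longrightarrow>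
     sets \<sigma>p = sets borel \<longrightarrow> sets \<sigma>n = sets borel \<longrightarrow>
     finite_measure \<sigma>p \<longrightarrow> finite_measure \<sigma>n \<longrightarrow>
     (\<exists>S\<in>sets borel. emeasure \<sigma>p (- S) = 0 \<and> emeasure \<sigma>n S = 0) \<longrightarrow>
     (\<forall>A\<in>sets borel. emeasure (stable_levy_measure \<alpha>) A + emeasure \<sigma>n A
                       = emeasure \<nu>Y A + emeasure \<sigma>p A) \<longrightarrow>
     m = measure \<sigma>p UNIV - measure \<sigma>n UNIV \<longrightarrow>
     M = measure \<sigma>p UNIV + measure \<sigma>n UNIV \<longrightarrow>
     0 < t0 \<longrightarrow> t0 \<le> 1 \<longrightarrow>
     (\<integral>\<^sup>+ t\<in>{0<..t0}. ennreal \<bar>pt t x - exp (- 2 * m * t) * pY t x\<bar> \<partial>lborel)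
        \<le> ennreal (C * t0 powr (2 - 1 / \<alpha>))"
proof -
  define C where "C = 2 * M * exp (2 * M + 1) / pi"
  show ?thesis
  proof (rule exI[of _ C], intro allI impI)
    fix pt pY :: "real \<Rightarrow> real \<Rightarrow> real" and \<nu>Y \<sigma>p \<sigma>n :: "real measure" and t0 x :: real
    assume pt: "is_transition_density (\<lambda>z. complex_of_real (\<bar>z\<bar> powr \<alpha>)) pt"
      and \<nu>: "is_levy_measure \<nu>Y" and sym: "symmetric_measure \<nu>Y"
      and pY: "is_transition_density (levy_exponent \<nu>Y) pY"
      and sets_p: "sets \<sigma>p = sets borel" and sets_n: "sets \<sigma>n = sets borel"
      and fin_p: "finite_measure \<sigma>p" and fin_n: "finite_measure \<sigma>n"
      and "\<exists>S\<in>sets borel. emeasure \<sigma>p (- S) = 0 \<and> emeasure \<sigma>n S = 0"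
      and eq: "\<forall>A\<in>sets borel. emeasure (stable_levy_measure \<alpha>) A + emeasure \<sigma>n A
                       = emeasure \<nu>Y A + emeasure \<sigma>p A"
      and m: "m = measure \<sigma>p UNIV - measure \<sigma>n UNIV"
      and M: "M = measure \<sigma>p UNIV + measure \<sigma>n UNIV"
      and t0: "0 < t0" "t0 \<le> 1"
    have \<psi>: "\<exists>w. levy_exponent \<nu>Y z = complex_of_real (\<bar>z\<bar> powr \<alpha> + w) \<and> \<bar>2 * m + w\<bar> \<le> 2 * M" for z
      unfolding m M using assms
      by (intro levy_exponent_stable_perturbation_bound \<nu> sym sets_p sets_n fin_p fin_n eq) auto
    have "\<bar>pt t x - exp (- 2 * m * t) * pY t x\<bar> \<le> C * t powr (1 - 1 / \<alpha>)" if "0 < t" "t \<le> t0" for t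
      using transition_density_difference_le[OF assms(1) pt pY \<psi>, of t x] that t0 by (simp add: C_def)
    moreover have "0 \<le> C"
      unfolding C_def M by simp
    ultimately have "(\<integral>\<^sup>+ t\<in>{0<..t0}. ennreal \<bar>pt t x - exp (- 2 * m * t) * pY t x\<bar> \<partial>lborel)
        \<le> ennreal (C * t0 powr (1 - 1 / \<alpha> + 1))"
      using assms(1) by (intro nn_integral_interval_le_powr t0(1)) auto
    then show "(\<integral>\<^sup>+ t\<in>{0<..t0}. ennreal \<bar>pt t x - exp (- 2 * m * t) * pY t x\<bar> \<partial>lborel)
        \<le> ennreal (C * t0 powr (2 - 1 / \<alpha>))"
      by (simp add: algebra_simps)
  qed
qed

end
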